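(* Let $\omega\in(0,\pi/2]$ and let $S$ be a monotone sofa with rotation angle $\omega$. Then $S$ is in standard position, $K:=\mathcal{C}(S)$ is a cap with rotation angle $\omega$, and $S=K\setminus\mathcal{N}(K)$.
   Context: For $t\in\mathbb{R}$ put $u_t=(\cos t,\sin t)$, $v_t=(-\sin t,\cos t)$; $R_t$ is counterclockwise rotation about the origin by $t$. For nonempty compact $X$, $p_X(t)=\max_{p\in X}p\cdot u_t$; $H(t,h)=\{p:p\cdot u_t\le h\}$. The hallway is $L=L_H\cup L_V$, $L_H=(-\infty,1]\times[0,1]$, $L_V=[0,1]\times(-\infty,1]$. A moving sofa is a connected, nonempty, compact $S\subset\mathbb{R}^2$ such that some translate of $S$ lies in $L_H$ and can be moved by a continuous rigid motion inside $L$ to a subset of $L_V$; its rotation angle $\omega\in(0,\pi/2]$ is the total clockwise angle rotated (fixed data of the sofa). It is in standard position if $p_S(\omega)=p_S(\pi/2)=1$. Let $H=\mathbb{R}\times[0,1]$, $V=[0,1]\times\mathbb{R}$, $P_\omega=H\cap R_\omega(V)$. For nonempty compact $X$: $L_X(t)=R_t(L)+(p_X(t)-1)u_t+(p_X(t+\pi/2)-1)v_t$, $Q_X^+(t)=H(t,p_X(t))\cap H(t+\pi/2,p_X(t+\pi/2))$, $Q_X^-(t)=\{p:p\cdot u_t<p_X(t)-1,\ p\cdot v_t<p_X(t+\pi/2)-1\}$. Monotonization of a moving sofa $S'$ with rotation angle $\omega$ in standard position: $\mathcal{M}(S')=P_\omega\cap\bigcap_{0\le t\le\omega}L_{S'}(t)$;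 a monotone sofa with rotation angle $\omega$ is a set $\mathcal{M}(S')$ for such $S'$ (it is itself a moving sofa with rotation angle $\omega$). $\mathcal{C}(S)=P_\omega\cap\bigcap_{0\le t\le\omega}Q_S^+(t)$. Fan: $F_\omega=\{(x,y):y\ge0,\ x\cos\omega+y\sin\omega\ge0\}$; niche $\mathcal{N}(K)=F_\omega\cap\bigcup_{0\le t\le\omega}Q_K^-(t)$. With $J_\omega=[0,\omega]\cup[\pi/2,\pi/2+\omega]$, a cap with rotation angle $\omega$ is a nonempty compact convex $K$ with $p_K(\omega)=p_K(\pi/2)=1$, $p_K(\pi+\omega)=p_K(3\pi/2)=0$, which is an intersection of closed half-planes $H(t,h)$ with $t\in J_\omega\cup\{\pi+\omega,3\pi/2\}$. *)

theory Defs
  imports "HOL-Analysis.Analysis"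
begin

definition uvec :: "real \<Rightarrow> real \<times> real" where
  "uvec t = (cos t, sin t)"

definition vvec :: "real \<Rightarrow> real \<times> real" where
  "vvec t = (- sin t, cos t)"

definition rot :: "real \<Rightarrow> real \<times> real \<Rightarrow> real \<times> real" where
  "rot t p = (cos t * fst p - sin t * snd p, sin t * fst p + cos t * snd p)"

definition supp :: "(real \<times> real) set \<Rightarrow> real \<Rightarrow> real" where
  "supp X t = Sup ((\<lambda>p. p \<bullet> uvec t) ` X)"

definition halfplane :: "real \<Rightarrow> real \<Rightarrow> (real \<times> real) set" where
  "halfplane t h = {p. p \<bullet> uvec t \<le> h}"

definition hallway_H :: "(real \<times> real) set" where
  "hallway_H = {p. fst p \<le> 1 \<and> 0 \<le> snd p \<and> snd p \<le> 1}"

definition hallway_V :: "(real \<times> real) set" where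
  "hallway_V = {p. 0 \<le> fst p \<and> fst p \<le> 1 \<and> snd p \<le> 1}"

definition hallway :: "(real \<times> real) set" where
  "hallway = hallway_H \<union> hallway_V"

text \<open>Moving sofa with rotation angle \<omega>: some translate lies in L_H and is moved
  by a continuous rigid motion p \<mapsto> R_{\<theta>(s)} p + x(s), s \<in> [0,1], inside L to a
  subset of L_V, rotating clockwise by total (net) angle \<omega>.\<close>
definition moving_sofa :: "real \<Rightarrow> (real \<times> real) set \<Rightarrow> bool" where
  "moving_sofa \<omega> S \<longleftrightarrow> connected S \<and> S \<noteq> {} \<and> compact S \<and>
    (\<exists>\<theta> :: real \<Rightarrow> real. \<exists>x :: real \<Rightarrow> real \<times> real.
       continuous_on {0..1} \<theta> \<and> continuous_on {0..1} x \<and>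
       \<theta> 0 = 0 \<and> \<theta> 1 = - \<omega> \<and>
       (\<lambda>p. p + x 0) ` S \<subseteq> hallway_H \<and>
       (\<forall>s\<in>{0..1}. (\<lambda>p. rot (\<theta> s) p + x s) ` S \<subseteq> hallway) \<and>
       (\<lambda>p. rot (\<theta> 1) p + x 1) ` S \<subseteq> hallway_V)"

definition standard_position :: "real \<Rightarrow> (real \<times> real) set \<Rightarrow> bool" where
  "standard_position \<omega> S \<longleftrightarrow> supp S \<omega> = 1 \<and> supp S (pi/2) = 1"

definition stripH :: "(real \<times> real) set" where
  "stripH = {p. 0 \<le> snd p \<and> snd p \<le> 1}"

definition stripV :: "(real \<times> real) set" where
  "stripV = {p. 0 \<le> fst p \<and> fst p \<le> 1}"

definition Pset :: "real \<Rightarrow> (real \<times> real) set" where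
  "Pset \<omega> = stripH \<inter> rot \<omega> ` stripV"

definition LX :: "(real \<times> real) set \<Rightarrow> real \<Rightarrow> (real \<times> real) set" where
  "LX X t = (\<lambda>p. p + (supp X t - 1) *\<^sub>R uvec t + (supp X (t + pi/2) - 1) *\<^sub>R vvec t)
             ` (rot t ` hallway)"

definition Qplus :: "(real \<times> real) set \<Rightarrow> real \<Rightarrow> (real \<times> real) set" where
  "Qplus X t = halfplane t (supp X t) \<inter> halfplane (t + pi/2) (supp X (t + pi/2))"

definition Qminus :: "(real \<times> real) set \<Rightarrow> real \<Rightarrow> (real \<times> real) set" where
  "Qminus X t = {p. p \<bullet> uvec t < supp X t - 1 \<and> p \<bullet> vvec t < supp X (t + pi/2) - 1}"

definition monotonization :: "real \<Rightarrow> (real \<times> real) set \<Rightarrow> (real \<times> real) set" where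
  "monotonization \<omega> S' = Pset \<omega> \<inter> (\<Inter>t\<in>{0..\<omega>}. LX S' t)"

definition monotone_sofa :: "real \<Rightarrow> (real \<times> real) set \<Rightarrow> bool" where
  "monotone_sofa \<omega> S \<longleftrightarrow>
     (\<exists>S'. moving_sofa \<omega> S' \<and> standard_position \<omega> S' \<and> S = monotonization \<omega> S')"

definition capC :: "real \<Rightarrow> (real \<times> real) set \<Rightarrow> (real \<times> real) set" where
  "capC \<omega> S = Pset \<omega> \<inter> (\<Inter>t\<in>{0..\<omega>}. Qplus S t)"

definition fan :: "real \<Rightarrow> (real \<times> real) set" where
  "fan \<omega> = {(x, y). 0 \<le> y \<and> 0 \<le> x * cos \<omega> + y * sin \<omega>}"

definition niche :: "real \<Rightarrow> (real \<times> real) set \<Rightarrow> (real \<times> real) set" where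
  "niche \<omega> K = fan \<omega> \<inter> (\<Union>t\<in>{0..\<omega>}. Qminus K t)"

definition Jset :: "real \<Rightarrow> real set" where
  "Jset \<omega> = {0..\<omega>} \<union> {pi/2..pi/2 + \<omega>}"

definition is_cap :: "real \<Rightarrow> (real \<times> real) set \<Rightarrow> bool" where
  "is_cap \<omega> K \<longleftrightarrow> K \<noteq> {} \<and> compact K \<and> convex K \<and>
     supp K \<omega> = 1 \<and> supp K (pi/2) = 1 \<and> supp K (pi + \<omega>) = 0 \<and> supp K (3*pi/2) = 0 \<and>
     (\<exists>A. A \<subseteq> (Jset \<omega> \<union> {pi + \<omega>, 3*pi/2}) \<times> UNIV \<and>
          K = (\<Inter>(t, h)\<in>A. halfplane t h))"

end

theory Submission
  imports Defs
begin

(* A moving sofa S' in standard position lies in P_\<omega> (look at its initial and final positions)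
   and in every L_S'(t), 0 <= t <= \<omega>: by the intermediate value theorem it passes through the
   angle -t, and the hallway at that moment confines it to L_S'(t).  Hence S' <= M(S') = S <= C(S').
   Since C(S') is cut out by the supporting half-planes of S' in the directions of J_\<omega>, every set
   squeezed between S' and C(S') has the same support function as S' on J_\<omega>.  So S is in standard
   position and C(S) = C(S'); and as L_X(t) = Q+_X(t) - Q-_X(t) with P_\<omega> inside the fan,
   M(S') = C(S') - N(C(S')).  The support of C(S') vanishes in the directions pi + \<omega> and 3 pi/2
   because sliding a touching point of S' along -u_\<omega> or -u_(pi/2) onto the boundary of P_\<omega>
   keeps it inside every Q+_S'(t). *)

lemma inner_uvec: "p \<bullet> uvec t = fst p * cos t + snd p * sin t"
  by (cases p) (simp add: uvec_def inner_prod_def)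

lemma inner_vvec: "p \<bullet> vvec t = snd p * cos t - fst p * sin t"
  by (cases p) (simp add: vvec_def inner_prod_def)

lemma uvec_add_pi_half: "uvec (t + pi/2) = vvec t"
  by (simp add: uvec_def vvec_def cos_add sin_add)

lemma uvec_pi_add: "uvec (pi + t) = - uvec t"
  by (simp add: uvec_def cos_add sin_add)

lemma uvec_3pi_half: "uvec (3*pi/2) = (0, -1)"
  using cos_3over2_pi sin_3over2_pi by (simp add: uvec_def)

lemma inner_uvec_uvec: "uvec s \<bullet> uvec t = cos (s - t)"
  by (simp add: inner_uvec uvec_def cos_diff)

lemma rot_add: "rot s (rot t p) = rot (s + t) p"
  by (simp add: rot_def sin_add cos_add algebra_simps)

lemma rot_zero: "rot 0 p = p"
  by (simp add: rot_def)

lemma mem_rot_image_iff: "q \<in> rot t ` A \<longleftrightarrow> rot (- t) q \<in> A"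
proof
  assume "q \<in> rot t ` A"
  then show "rot (- t) q \<in> A"
    using rot_add[of "- t" t] by (auto simp: rot_zero)
next
  assume "rot (- t) q \<in> A"
  moreover have "q = rot t (rot (- t) q)"
    by (simp add: rot_add rot_zero)
  ultimately show "q \<in> rot t ` A"
    by blast
qed

lemma mem_translation_image_iff: "x \<in> (\<lambda>q. q + c) ` A \<longleftrightarrow> x - c \<in> A"
  for c :: "'a::ab_group_add"
  by (metis (no_types, lifting) diff_add_cancel add_diff_cancel image_iff)

lemma rot_uminus: "rot (- t) p = (p \<bullet> uvec t, p \<bullet> vvec t)"
  by (simp add: rot_def inner_uvec inner_vvec algebra_simps)

lemma compact_inner_uvec_image: "compact X \<Longrightarrow> compact ((\<lambda>p. p \<bullet> uvec t) ` X)"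
  by (intro compact_continuous_image continuous_on_inner continuous_on_id continuous_on_const)

lemma supp_upper: "compact X \<Longrightarrow> p \<in> X \<Longrightarrow> p \<bullet> uvec t \<le> supp X t"
  unfolding supp_def
  by (intro cSup_upper imageI bounded_imp_bdd_above compact_imp_bounded compact_inner_uvec_image)

lemma supp_eqI:
  "p \<in> X \<Longrightarrow> p \<bullet> uvec t = h \<Longrightarrow> (\<And>q. q \<in> X \<Longrightarrow> q \<bullet> uvec t \<le> h) \<Longrightarrow> supp X t = h"
  unfolding supp_def by (rule cSup_eq_maximum) auto

lemma supp_attained:
  assumes "compact X" "X \<noteq> {}"
  obtains p where "p \<in> X" "p \<bullet> uvec t = supp X t"
proof -
  have "continuous_on X (\<lambda>p. p \<bullet> uvec t)"
    by (intro continuous_intros)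
  then obtain p where "p \<in> X" "\<forall>q\<in>X. q \<bullet> uvec t \<le> p \<bullet> uvec t"
    using continuous_attains_sup[OF assms] by blast
  then show thesis
    using that supp_eqI by metis
qed

lemma supp_eq_if_between:
  assumes "compact X" "X \<noteq> {}" "X \<subseteq> Y" "Y \<subseteq> halfplane t (supp X t)"
  shows "supp Y t = supp X t"
proof -
  obtain p where "p \<in> X" "p \<bullet> uvec t = supp X t"
    using supp_attained assms(1,2) .
  then show ?thesis
    using assms(3,4) by (intro supp_eqI[of p]) (auto simp: halfplane_def)
qed

lemma hallway_iff: "q \<in> hallway \<longleftrightarrow> fst q \<le> 1 \<and> snd q \<le> 1 \<and> (0 \<le> fst q \<or> 0 \<le> snd q)"
  unfolding hallway_def hallway_H_def hallway_V_def by auto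

lemma LX_iff:
  "p \<in> LX X t \<longleftrightarrow>
     (p \<bullet> uvec t - supp X t + 1, p \<bullet> vvec t - supp X (t + pi/2) + 1) \<in> hallway"
proof -
  define c where "c = (supp X t - 1) *\<^sub>R uvec t + (supp X (t + pi/2) - 1) *\<^sub>R vvec t"
  have "p \<in> LX X t \<longleftrightarrow> p - c \<in> rot t ` hallway"
    unfolding LX_def c_def add.assoc mem_translation_image_iff ..
  moreover have "(p - c) \<bullet> uvec t = p \<bullet> uvec t - supp X t + 1"
    and "(p - c) \<bullet> vvec t = p \<bullet> vvec t - supp X (t + pi/2) + 1"
    using inner_uvec_uvec[of t t] inner_uvec_uvec[of "t + pi/2" t]
      inner_uvec_uvec[of t "t + pi/2"] inner_uvec_uvec[of "t + pi/2" "t + pi/2"]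
    by (simp_all add: c_def uvec_add_pi_half inner_diff_left inner_add_left algebra_simps)
  ultimately show ?thesis
    by (simp add: mem_rot_image_iff rot_uminus)
qed

lemma LX_eq_Qplus_Diff_Qminus: "LX X t = Qplus X t - Qminus X t"
  by (auto simp: set_eq_iff LX_iff hallway_iff Qplus_def Qminus_def halfplane_def uvec_add_pi_half)

lemma Pset_iff:
  "p \<in> Pset \<omega> \<longleftrightarrow> 0 \<le> snd p \<and> snd p \<le> 1 \<and> 0 \<le> p \<bullet> uvec \<omega> \<and> p \<bullet> uvec \<omega> \<le> 1"
  by (simp add: Pset_def stripH_def stripV_def mem_rot_image_iff rot_uminus)

lemma Pset_eq_halfplanes:
  "Pset \<omega> = halfplane \<omega> 1 \<inter> halfplane (pi/2) 1 \<inter> halfplane (pi + \<omega>) 0 \<inter> halfplane (3*pi/2) 0"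
  by (auto simp: Pset_iff halfplane_def uvec_pi_add uvec_3pi_half inner_uvec)

lemma Pset_subset_fan: "Pset \<omega> \<subseteq> fan \<omega>"
  by (auto simp: Pset_iff inner_uvec fan_def)

lemma subset_Qplus: "compact X \<Longrightarrow> X \<subseteq> Qplus X t"
  by (auto simp: Qplus_def halfplane_def supp_upper)

lemma subset_capC: "compact X \<Longrightarrow> X \<subseteq> Pset \<omega> \<Longrightarrow> X \<subseteq> capC \<omega> X"
  by (auto simp: capC_def dest: subset_Qplus)

lemma capC_subset_halfplane:
  assumes "t \<in> Jset \<omega>"
  shows "capC \<omega> X \<subseteq> halfplane t (supp X t)"
  using assms unfolding Jset_def
proof (elim UnE)
  assume "t \<in> {0..\<omega>}"
  then show ?thesis
    by (auto simp: capC_def Qplus_def)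
next
  assume "t \<in> {pi/2..pi/2 + \<omega>}"
  then have "capC \<omega> X \<subseteq> Qplus X (t - pi/2)"
    unfolding capC_def by auto
  then show ?thesis
    by (simp add: Qplus_def)
qed

lemma supp_eq_if_between_capC:
  "compact X \<Longrightarrow> X \<noteq> {} \<Longrightarrow> X \<subseteq> Y \<Longrightarrow> Y \<subseteq> capC \<omega> X \<Longrightarrow> t \<in> Jset \<omega> \<Longrightarrow>
   supp Y t = supp X t"
  by (meson capC_subset_halfplane order_trans supp_eq_if_between)

lemma capC_cong: "(\<And>t. t \<in> Jset \<omega> \<Longrightarrow> supp Y t = supp X t) \<Longrightarrow> capC \<omega> Y = capC \<omega> X"
  by (simp add: capC_def Qplus_def Jset_def)

lemma niche_cong: "(\<And>t. t \<in> Jset \<omega> \<Longrightarrow> supp Y t = supp X t) \<Longrightarrow> niche \<omega> Y = niche \<omega> X"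
  by (simp add: niche_def Qminus_def Jset_def)

lemma monotonization_eq_capC_Diff_niche: "monotonization \<omega> X = capC \<omega> X - niche \<omega> X"
  using Pset_subset_fan
  by (auto simp: monotonization_def capC_def niche_def LX_eq_Qplus_Diff_Qminus)

lemma capC_eq_Inter_halfplanes:
  assumes "0 \<le> \<omega>"
  shows "\<exists>A \<subseteq> (Jset \<omega> \<union> {pi + \<omega>, 3*pi/2}) \<times> UNIV. capC \<omega> X = (\<Inter>(t, h)\<in>A. halfplane t h)"
proof
  let ?A = "{(\<omega>, 1), (pi/2, 1), (pi + \<omega>, 0), (3*pi/2, 0)}
    \<union> (\<lambda>t. (t, supp X t)) ` {0..\<omega>} \<union> (\<lambda>t. (t + pi/2, supp X (t + pi/2))) ` {0..\<omega>}"
  show "?A \<subseteq> (Jset \<omega> \<union> {pi + \<omega>, 3*pi/2}) \<times> UNIV \<and> capC \<omega> X = (\<Inter>(t, h)\<in>?A. halfplane t h)"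
    using assms by (auto simp: Jset_def capC_def Pset_eq_halfplanes Qplus_def)
qed

lemma convex_closed_capC:
  assumes "0 \<le> \<omega>"
  shows "convex (capC \<omega> X)" "closed (capC \<omega> X)"
proof -
  have hp: "halfplane t h = {p. uvec t \<bullet> p \<le> h}" for t h
    by (simp add: halfplane_def inner_commute)
  obtain A where "capC \<omega> X = (\<Inter>(t, h)\<in>A. halfplane t h)"
    using capC_eq_Inter_halfplanes[OF assms] by blast
  then show "convex (capC \<omega> X)" "closed (capC \<omega> X)"
    by (auto simp: hp intro!: convex_INT closed_INT convex_halfspace_le closed_halfspace_le)
qed

lemma bounded_capC:
  assumes "0 < \<omega>" "\<omega> \<le> pi/2"
  shows "bounded (capC \<omega> X)"
proof -
  define M where "M = \<bar>supp X 0\<bar> + \<bar>supp X (\<omega> + pi/2)\<bar> / sin \<omega>"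
  have sin: "0 < sin \<omega>" and cos: "0 \<le> cos \<omega>"
    using assms by (auto intro!: sin_gt_zero cos_ge_zero)
  have "capC \<omega> X \<subseteq> {-M..M} \<times> {0..1}"
  proof
    fix p assume p: "p \<in> capC \<omega> X"
    then have y: "0 \<le> snd p" "snd p \<le> 1"
      by (auto simp: capC_def Pset_iff)
    have "p \<in> Qplus X 0" "p \<in> Qplus X \<omega>"
      using p assms(1) by (auto simp: capC_def)
    then have x_le: "fst p \<le> supp X 0"
      and "snd p * cos \<omega> - fst p * sin \<omega> \<le> supp X (\<omega> + pi/2)"
      by (auto simp: Qplus_def halfplane_def inner_uvec uvec_add_pi_half inner_vvec)
    moreover have "0 \<le> snd p * cos \<omega>"
      using y cos by simp
    ultimately have "- fst p \<le> \<bar>supp X (\<omega> + pi/2)\<bar> / sin \<omega>"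
      using sin by (simp add: pos_le_divide_eq)
    moreover have "0 \<le> \<bar>supp X (\<omega> + pi/2)\<bar> / sin \<omega>"
      using sin by simp
    ultimately show "p \<in> {-M..M} \<times> {0..1}"
      using x_le y by (cases p) (auto simp: M_def)
  qed
  then show ?thesis
    by (rule bounded_subset[OF bounded_Times[OF bounded_closed_interval bounded_closed_interval]])
qed

lemma Qplus_diff_uvec:
  assumes "p \<in> Qplus X t" "0 \<le> c" "t \<le> s" "s \<le> t + pi/2"
  shows "p - c *\<^sub>R uvec s \<in> Qplus X t"
proof -
  have "0 \<le> cos (s - t)" "0 \<le> cos (s - (t + pi/2))"
    using assms(3,4) by (auto intro!: cos_ge_zero)
  then have "0 \<le> c * (uvec s \<bullet> uvec t)" "0 \<le> c * (uvec s \<bullet> uvec (t + pi/2))"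
    using assms(2) by (simp_all add: inner_uvec_uvec)
  then show ?thesis
    using assms(1) by (auto simp: Qplus_def halfplane_def inner_diff_left)
qed

lemma capC_diff_uvec:
  assumes "p \<in> capC \<omega> X" "0 \<le> c" "\<omega> \<le> s" "s \<le> pi/2" "p - c *\<^sub>R uvec s \<in> Pset \<omega>"
  shows "p - c *\<^sub>R uvec s \<in> capC \<omega> X"
  using assms by (auto simp: capC_def intro!: Qplus_diff_uvec)

lemma supp_capC_pi_add:
  assumes "0 \<le> \<omega>" "\<omega> \<le> pi/2" "p \<in> capC \<omega> X" "snd p = 1"
  shows "supp (capC \<omega> X) (pi + \<omega>) = 0"
proof -
  define c where "c = p \<bullet> uvec \<omega>"
  define q where "q = p - c *\<^sub>R uvec \<omega>"
  have c: "0 \<le> c" "c \<le> 1"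
    using assms(3) by (auto simp: capC_def Pset_iff c_def)
  have sin: "0 \<le> sin \<omega>" "sin \<omega> \<le> 1"
    using assms(1,2) by (auto intro!: sin_ge_zero)
  have q_u: "q \<bullet> uvec \<omega> = 0"
    using inner_uvec_uvec[of \<omega> \<omega>] by (simp add: q_def c_def inner_diff_left)
  have "snd q = 1 - c * sin \<omega>"
    by (simp add: q_def assms(4) uvec_def)
  moreover have "c * sin \<omega> \<le> 1"
    using c sin by (simp add: mult_le_one)
  ultimately have "q \<in> Pset \<omega>"
    using q_u c sin by (simp add: Pset_iff)
  then have "q \<in> capC \<omega> X"
    unfolding q_def using assms(2,3) c by (intro capC_diff_uvec) (auto simp: q_def)
  then show ?thesis
    using q_u by (intro supp_eqI[of q]) (auto simp: uvec_pi_add capC_def Pset_iff)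
qed

lemma supp_capC_3pi_half:
  assumes "0 \<le> \<omega>" "\<omega> \<le> pi/2" "p \<in> capC \<omega> X" "p \<bullet> uvec \<omega> = 1"
  shows "supp (capC \<omega> X) (3*pi/2) = 0"
proof -
  define q where "q = p - snd p *\<^sub>R uvec (pi/2)"
  have y: "0 \<le> snd p" "snd p \<le> 1"
    using assms(3) by (auto simp: capC_def Pset_iff)
  have sin: "0 \<le> sin \<omega>" "sin \<omega> \<le> 1"
    using assms(1,2) by (auto intro!: sin_ge_zero)
  have q_y: "snd q = 0"
    by (simp add: q_def uvec_def)
  have "q \<bullet> uvec \<omega> = 1 - snd p * sin \<omega>"
    using assms(4) by (simp add: q_def inner_diff_left inner_uvec_uvec cos_diff)
  moreover have "snd p * sin \<omega> \<le> 1" "0 \<le> snd p * sin \<omega>"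
    using y sin by (simp_all add: mult_le_one)
  ultimately have "q \<in> Pset \<omega>"
    using q_y by (simp add: Pset_iff)
  then have "q \<in> capC \<omega> X"
    unfolding q_def using assms(2,3) y by (intro capC_diff_uvec) (auto simp: q_def)
  then show ?thesis
    using q_y by (intro supp_eqI[of q]) (auto simp: uvec_3pi_half capC_def Pset_iff inner_prod_def)
qed

lemma is_cap_capC:
  assumes "0 < \<omega>" "\<omega> \<le> pi/2" "compact X" "X \<noteq> {}" "X \<subseteq> Pset \<omega>" "standard_position \<omega> X"
  shows "is_cap \<omega> (capC \<omega> X)"
proof -
  let ?K = "capC \<omega> X"
  have XK: "X \<subseteq> ?K"
    using subset_capC assms(3,5) .
  have "supp ?K t = supp X t" if "t \<in> Jset \<omega>" for t
    using supp_eq_if_between_capC[OF assms(3,4) XK order_refl that] .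
  then have supp_K: "supp ?K \<omega> = 1" "supp ?K (pi/2) = 1"
    using assms(1,6) by (auto simp: Jset_def standard_position_def)
  obtain p0 where "p0 \<in> X" "p0 \<bullet> uvec (pi/2) = 1"
    using supp_attained[OF assms(3,4)] assms(6) by (metis standard_position_def)
  then have "supp ?K (pi + \<omega>) = 0"
    using XK assms(1,2) by (intro supp_capC_pi_add[of _ p0]) (auto simp: inner_uvec)
  moreover obtain p1 where "p1 \<in> X" "p1 \<bullet> uvec \<omega> = 1"
    using supp_attained[OF assms(3,4)] assms(6) by (metis standard_position_def)
  then have "supp ?K (3*pi/2) = 0"
    using XK assms(1,2) by (intro supp_capC_3pi_half[of _ p1]) auto
  moreover have "compact ?K"
    using assms(1,2) by (simp add: compact_eq_bounded_closed bounded_capC convex_closed_capC)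
  ultimately show ?thesis
    unfolding is_cap_def using assms(1,4) XK supp_K convex_closed_capC capC_eq_Inter_halfplanes
    by (metis less_eq_real_def subset_empty)
qed

lemma moving_sofaE:
  assumes "moving_sofa \<omega> S"
  obtains \<theta> :: "real \<Rightarrow> real" and x :: "real \<Rightarrow> real \<times> real"
  where "compact S" "S \<noteq> {}" "continuous_on {0..1} \<theta>" "\<theta> 0 = 0" "\<theta> 1 = - \<omega>"
    "(\<lambda>p. p + x 0) ` S \<subseteq> hallway_H"
    "\<forall>s\<in>{0..1}. (\<lambda>p. rot (\<theta> s) p + x s) ` S \<subseteq> hallway"
    "(\<lambda>p. rot (- \<omega>) p + x 1) ` S \<subseteq> hallway_V"
proof -
  obtain \<theta> :: "real \<Rightarrow> real" and x :: "real \<Rightarrow> real \<times> real"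
    where "compact S" "S \<noteq> {}" "continuous_on {0..1} \<theta>" "\<theta> 0 = 0" "\<theta> 1 = - \<omega>"
      "(\<lambda>p. p + x 0) ` S \<subseteq> hallway_H"
      "\<forall>s\<in>{0..1}. (\<lambda>p. rot (\<theta> s) p + x s) ` S \<subseteq> hallway"
      "(\<lambda>p. rot (\<theta> 1) p + x 1) ` S \<subseteq> hallway_V"
    using assms unfolding moving_sofa_def by blast
  then show thesis
    using that by simp
qed

lemma moving_sofa_subset_Pset:
  assumes "moving_sofa \<omega> S" "standard_position \<omega> S"
  shows "S \<subseteq> Pset \<omega>"
proof
  obtain x :: "real \<Rightarrow> real \<times> real" where S: "compact S" "S \<noteq> {}"
    and start: "(\<lambda>p. p + x 0) ` S \<subseteq> hallway_H"
    and final: "(\<lambda>p. rot (- \<omega>) p + x 1) ` S \<subseteq> hallway_V"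
    using assms(1) by (rule moving_sofaE)
  obtain p0 where p0: "p0 \<in> S" "p0 \<bullet> uvec (pi/2) = 1"
    using supp_attained[OF S] assms(2) by (metis standard_position_def)
  obtain p1 where p1: "p1 \<in> S" "p1 \<bullet> uvec \<omega> = 1"
    using supp_attained[OF S] assms(2) by (metis standard_position_def)
  fix p assume p: "p \<in> S"
  have "p + x 0 \<in> hallway_H" "p0 + x 0 \<in> hallway_H"
    using start p p0(1) by auto
  then have "0 \<le> snd p"
    using p0(2) by (auto simp: hallway_H_def inner_uvec)
  moreover have "rot (- \<omega>) p + x 1 \<in> hallway_V" "rot (- \<omega>) p1 + x 1 \<in> hallway_V"
    using final p p1(1) by auto
  then have "0 \<le> p \<bullet> uvec \<omega>"
    using p1(2) by (auto simp: hallway_V_def rot_uminus)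
  moreover have "snd p \<le> 1" "p \<bullet> uvec \<omega> \<le> 1"
    using supp_upper[OF S(1) p, of "pi/2"] supp_upper[OF S(1) p, of \<omega>] assms(2)
    by (simp_all add: standard_position_def inner_uvec)
  ultimately show "p \<in> Pset \<omega>"
    by (simp add: Pset_iff)
qed

lemma subset_LX_if_rot_translate_in_hallway:
  assumes "compact X" "X \<noteq> {}" "(\<lambda>p. rot (- t) p + x) ` X \<subseteq> hallway"
  shows "X \<subseteq> LX X t"
proof
  have moved: "(p \<bullet> uvec t + fst x, p \<bullet> vvec t + snd x) \<in> hallway" if "p \<in> X" for p
    using assms(3) that by (cases x) (auto simp: rot_uminus)
  obtain pa where pa: "pa \<in> X" "pa \<bullet> uvec t = supp X t"
    using supp_attained[OF assms(1,2)] .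
  obtain pb where pb: "pb \<in> X" "pb \<bullet> uvec (t + pi/2) = supp X (t + pi/2)"
    using supp_attained[OF assms(1,2)] .
  have "supp X t + fst x \<le> 1" "supp X (t + pi/2) + snd x \<le> 1"
    using moved[OF pa(1)] moved[OF pb(1)] pa(2) pb(2) by (simp_all add: hallway_iff uvec_add_pi_half)
  moreover fix p assume p: "p \<in> X"
  moreover have "p \<bullet> uvec t \<le> supp X t" "p \<bullet> vvec t \<le> supp X (t + pi/2)"
    using supp_upper[OF assms(1) p, of t] supp_upper[OF assms(1) p, of "t + pi/2"]
    by (simp_all add: uvec_add_pi_half)
  ultimately show "p \<in> LX X t"
    using moved[OF p] unfolding LX_iff hallway_iff fst_conv snd_conv by linarith
qed

lemma moving_sofa_subset_LX:
  assumes "moving_sofa \<omega> S" "t \<in> {0..\<omega>}"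
  shows "S \<subseteq> LX S t"
proof -
  obtain \<theta> :: "real \<Rightarrow> real" and x :: "real \<Rightarrow> real \<times> real"
    where S: "compact S" "S \<noteq> {}"
    and \<theta>: "continuous_on {0..1} \<theta>" "\<theta> 0 = 0" "\<theta> 1 = - \<omega>"
    and inside: "\<forall>s\<in>{0..1}. (\<lambda>p. rot (\<theta> s) p + x s) ` S \<subseteq> hallway"
    using assms(1) by (rule moving_sofaE)
  obtain s where s: "s \<in> {0..1}" "\<theta> s = - t"
    using IVT2'[of \<theta> 1 "- t" 0] \<theta> assms(2) by auto
  have "(\<lambda>p. rot (\<theta> s) p + x s) ` S \<subseteq> hallway"
    using inside s(1) by blast
  then have "(\<lambda>p. rot (- t) p + x s) ` S \<subseteq> hallway"
    unfolding s(2) .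
  then show ?thesis
    using subset_LX_if_rot_translate_in_hallway S by blast
qed

lemma subset_monotonization:
  "moving_sofa \<omega> S \<Longrightarrow> standard_position \<omega> S \<Longrightarrow> S \<subseteq> monotonization \<omega> S"
  unfolding monotonization_def using moving_sofa_subset_Pset moving_sofa_subset_LX by blast

theorem theorem3p14:
  fixes \<omega> :: real and S :: "(real \<times> real) set"
  assumes "0 < \<omega>" and "\<omega> \<le> pi/2"
    and "monotone_sofa \<omega> S"
  shows "standard_position \<omega> S \<and> is_cap \<omega> (capC \<omega> S) \<and>
         S = capC \<omega> S - niche \<omega> (capC \<omega> S)"
proof -
  obtain S' where sofa: "moving_sofa \<omega> S'" and std: "standard_position \<omega> S'"
    and S: "S = monotonization \<omega> S'"
    using assms(3) unfolding monotone_sofa_def by blast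
  have S': "compact S'" "S' \<noteq> {}"
    using sofa unfolding moving_sofa_def by blast+
  define K where "K = capC \<omega> S'"
  have "S' \<subseteq> S" "S \<subseteq> K"
    using subset_monotonization[OF sofa std]
    unfolding S K_def monotonization_eq_capC_Diff_niche by blast+
  then have supp_S: "supp S t = supp S' t" and supp_K: "supp K t = supp S' t"
    if "t \<in> Jset \<omega>" for t
    using supp_eq_if_between_capC[OF S'] that unfolding K_def by blast+
  have "standard_position \<omega> S"
    using std supp_S assms(1) by (simp add: standard_position_def Jset_def)
  moreover have "capC \<omega> S = K"
    unfolding K_def using supp_S by (rule capC_cong)
  moreover have "is_cap \<omega> K"
    unfolding K_def using assms(1,2) S' moving_sofa_subset_Pset[OF sofa std] std by (rule is_cap_capC)
  moreover have "niche \<omega> K = niche \<omega> S'"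
    using supp_K by (rule niche_cong)
  then have "S = K - niche \<omega> K"
    unfolding S K_def by (simp add: monotonization_eq_capC_Diff_niche)
  ultimately show ?thesis
    by simp
qed

end
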